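(* Let $S$ be a TBLS search with strict partial order $\prec_S$ on $P_f(\mathbb{N}^+)$, and let $G=(V,E)$ be a graph. An ordering $\sigma$ of $V$ is an $S$-ordering of $G$ if and only if for every $x,y\in V$ with $x<_\sigma y$ we have $N_\sigma(x,x)\not\prec_S N_\sigma(y,x)$.
   Context: Let $G=(V,E)$ be a finite (not necessarily connected) undirected graph with $n$ vertices; $N(v)$ denotes the set of neighbours of $v$. An ordering of $V$ is a bijection $\sigma:\{1,\dots,n\}\to V$; $\sigma(i)$ is the $i$th vertex and $x<_\sigma y$ means $\sigma^{-1}(x)<\sigma^{-1}(y)$. $P_f(\mathbb{N}^+)$ is the set of finite subsets of the positive integers. Given a strict partial order $\prec$ on $P_f(\mathbb{N}^+)$ and an ordering $\tau$ of $V$, the Tie-Breaking Label Search $\mathrm{TBLS}(G,\prec,\tau)$ is the procedure: set $label(v)=\emptyset$ for every $v$; for $i=1,\dots,n$: let Eligible be the set of unnumbered vertices $x$ such that there is no unnumbered vertex $y$ with $label(x)\prec label(y)$; let $v$ be the first vertex of Eligible in the ordering $\tau$; set $\sigma(i)=v$ ($v$ becomes numbered); for every unnumbered neighbour $w$ of $v$ replace $label(w)$ by $label(w)\cup\{i\}$. The output is $\sigma$. A TBLS search $S$ is specified by a strict partial order $\prec_S$ on $P_f(\mathbb{N}^+)$; an ordering $\sigma$ of $V$ is an $S$-ordering of $G$ if $\sigma=\mathrm{TBLS}(G,\prec_S,\tau)$ for some ordering $\tau$ of $V$. For vertices $u,v$ and an ordering $\sigma$, $N_\sigma(u,v)=\{i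 : \sigma(i)\in N(u)\text{ and }\sigma(i)<_\sigma v\}$. *)

theory Defs
  imports Main
begin

definition graph :: "'a set \<Rightarrow> ('a \<Rightarrow> 'a \<Rightarrow> bool) \<Rightarrow> bool" where
  "graph V E \<longleftrightarrow> finite V \<and> (\<forall>x y. E x y \<longrightarrow> x \<in> V \<and> y \<in> V)
     \<and> (\<forall>x y. E x y \<longrightarrow> E y x) \<and> (\<forall>x. \<not> E x x)"

text \<open>An ordering of V is represented as the list [sigma(1), ..., sigma(n)]
(a bijection {1..n} -> V).\<close>
definition is_ordering :: "'a set \<Rightarrow> 'a list \<Rightarrow> bool" where
  "is_ordering V \<sigma> \<longleftrightarrow> distinct \<sigma> \<and> set \<sigma> = V"

definition nth1 :: "'a list \<Rightarrow> nat \<Rightarrow> 'a" where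
  "nth1 \<sigma> i = \<sigma> ! (i - 1)"

definition before :: "'a list \<Rightarrow> 'a \<Rightarrow> 'a \<Rightarrow> bool" where
  "before \<sigma> x y \<longleftrightarrow> (\<exists>i j. 1 \<le> i \<and> i < j \<and> j \<le> length \<sigma> \<and> nth1 \<sigma> i = x \<and> nth1 \<sigma> j = y)"

definition Pf_pos :: "nat set set" where
  "Pf_pos = {A. finite A \<and> 0 \<notin> A}"

text \<open>A strict partial order on P_f(N+) (the relation is only relevant on P_f(N+)).\<close>
definition strict_po_Pf :: "(nat set \<Rightarrow> nat set \<Rightarrow> bool) \<Rightarrow> bool" where
  "strict_po_Pf prec \<longleftrightarrow>
     (\<forall>A\<in>Pf_pos. \<not> prec A A) \<and>
     (\<forall>A\<in>Pf_pos. \<forall>B\<in>Pf_pos. \<forall>C\<in>Pf_pos. prec A B \<longrightarrow> prec B C \<longrightarrow> prec A C)"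

text \<open>One iteration of TBLS. State: (numbered vertices in order, labels).\<close>
definition tbls_step :: "'a set \<Rightarrow> ('a \<Rightarrow> 'a \<Rightarrow> bool) \<Rightarrow> (nat set \<Rightarrow> nat set \<Rightarrow> bool)
    \<Rightarrow> 'a list \<Rightarrow> 'a list \<times> ('a \<Rightarrow> nat set) \<Rightarrow> 'a list \<times> ('a \<Rightarrow> nat set)" where
  "tbls_step V E prec \<tau> st =
     (let \<sigma> = fst st; label = snd st;
          unnum = V - set \<sigma>;
          eligible = {x \<in> unnum. \<not> (\<exists>y\<in>unnum. prec (label x) (label y))};
          v = hd (filter (\<lambda>x. x \<in> eligible) \<tau>);
          i = length \<sigma> + 1
      in (\<sigma> @ [v],
          (\<lambda>w. if w \<in> unnum - {v} \<and> E v w then label w \<union> {i} else label w)))"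

definition tbls :: "'a set \<Rightarrow> ('a \<Rightarrow> 'a \<Rightarrow> bool) \<Rightarrow> (nat set \<Rightarrow> nat set \<Rightarrow> bool)
    \<Rightarrow> 'a list \<Rightarrow> 'a list" where
  "tbls V E prec \<tau> = fst ((tbls_step V E prec \<tau> ^^ card V) ([], (\<lambda>_. {})))"

definition S_ordering :: "'a set \<Rightarrow> ('a \<Rightarrow> 'a \<Rightarrow> bool) \<Rightarrow> (nat set \<Rightarrow> nat set \<Rightarrow> bool)
    \<Rightarrow> 'a list \<Rightarrow> bool" where
  "S_ordering V E prec \<sigma> \<longleftrightarrow> (\<exists>\<tau>. is_ordering V \<tau> \<and> \<sigma> = tbls V E prec \<tau>)"

definition N_sigma :: "('a \<Rightarrow> 'a \<Rightarrow> bool) \<Rightarrow> 'a list \<Rightarrow> 'a \<Rightarrow> 'a \<Rightarrow> nat set" where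
  "N_sigma E \<sigma> u v = {i. 1 \<le> i \<and> i \<le> length \<sigma> \<and> E u (nth1 \<sigma> i) \<and> before \<sigma> (nth1 \<sigma> i) v}"

end

theory Submission
  imports Defs
begin

text \<open>After the vertices of a prefix s have been numbered, the label of an unnumbered vertex
  is the set of positions of its neighbours in s (\<open>prefix_label\<close>), so a TBLS run is
  determined by its output: each vertex must be \<open>prec\<close>-maximal among the unnumbered
  vertices with respect to the labels of the preceding prefix (\<open>greedy\<close>). Such a
  maximal vertex exists because \<open>prec\<close> is a strict partial order, so every TBLS output
  is greedy; conversely, TBLS with tie-break order \<open>\<tau> = \<sigma>\<close> reproduces a greedy \<open>\<sigma>\<close>,
  because at each step all vertices preceding the next one in \<open>\<sigma>\<close> are already numbered.
  Finally \<open>N_sigma E \<sigma> u (\<sigma> ! j)\<close> is the label of u after j steps, which turns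
  greediness into the neighbourhood condition.\<close>

definition prefix_label :: "('a \<Rightarrow> 'a \<Rightarrow> bool) \<Rightarrow> 'a list \<Rightarrow> 'a \<Rightarrow> nat set" where
  "prefix_label E s w = {i. 1 \<le> i \<and> i \<le> length s \<and> E w (nth1 s i)}"

lemma prefix_label_in_Pf_pos: "prefix_label E s w \<in> Pf_pos"
proof -
  have "prefix_label E s w \<subseteq> {1..length s}" by (auto simp: prefix_label_def)
  then show ?thesis unfolding Pf_pos_def by (auto intro: finite_subset)
qed

lemma prefix_label_snoc:
  "prefix_label E (s @ [v]) w =
     (if E w v then insert (Suc (length s)) (prefix_label E s w) else prefix_label E s w)"
  by (auto simp: prefix_label_def nth1_def nth_append le_Suc_eq)

lemma strict_po_Pf_has_maximal:
  assumes "strict_po_Pf prec" and "finite U" and "U \<noteq> {}" and "f ` U \<subseteq> Pf_pos"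
  shows "\<exists>x\<in>U. \<forall>y\<in>U. \<not> prec (f x) (f y)"
  using assms(2-4)
proof (induction U rule: finite_ne_induct)
  case (singleton a)
  then show ?case using assms(1) by (simp add: strict_po_Pf_def)
next
  case (insert a F)
  then obtain x where x: "x \<in> F" "\<forall>y\<in>F. \<not> prec (f x) (f y)" by auto
  show ?case
  proof (cases "prec (f x) (f a)")
    case True
    have "\<not> prec (f a) (f y)" if "y \<in> insert a F" for y
    proof -
      have Pf: "f a \<in> Pf_pos" "f x \<in> Pf_pos" "f y \<in> Pf_pos"
        using insert.prems that x(1) by auto
      show ?thesis
      proof
        assume "prec (f a) (f y)"
        then have "prec (f x) (f y)" and "y \<noteq> a"
          using True Pf assms(1) unfolding strict_po_Pf_def by blast+
        then show False using x that by blast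
      qed
    qed
    then show ?thesis by blast
  next
    case False
    then show ?thesis using x by blast
  qed
qed

definition eligible :: "'a set \<Rightarrow> ('a \<Rightarrow> 'a \<Rightarrow> bool) \<Rightarrow> (nat set \<Rightarrow> nat set \<Rightarrow> bool)
    \<Rightarrow> 'a list \<Rightarrow> 'a set" where
  "eligible V E prec s = {x \<in> V - set s.
     \<forall>y\<in>V - set s. \<not> prec (prefix_label E s x) (prefix_label E s y)}"

lemma eligible_nonempty:
  assumes "strict_po_Pf prec" and "finite V" and "\<not> V \<subseteq> set s"
  shows "eligible V E prec s \<noteq> {}"
proof -
  have "\<exists>x\<in>V - set s. \<forall>y\<in>V - set s. \<not> prec (prefix_label E s x) (prefix_label E s y)"
    using assms by (intro strict_po_Pf_has_maximal) (auto simp: prefix_label_in_Pf_pos)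
  then show ?thesis by (auto simp: eligible_def)
qed

definition greedy :: "'a set \<Rightarrow> ('a \<Rightarrow> 'a \<Rightarrow> bool) \<Rightarrow> (nat set \<Rightarrow> nat set \<Rightarrow> bool)
    \<Rightarrow> 'a list \<Rightarrow> bool" where
  "greedy V E prec s \<longleftrightarrow> (\<forall>j<length s. s ! j \<in> eligible V E prec (take j s))"

lemma greedy_Nil [simp]: "greedy V E prec []"
  by (simp add: greedy_def)

lemma greedy_snoc:
  "greedy V E prec (s @ [v]) \<longleftrightarrow> greedy V E prec s \<and> v \<in> eligible V E prec s"
  by (auto simp: greedy_def nth_append less_Suc_eq)

lemma greedy_distinct_subset:
  "greedy V E prec s \<Longrightarrow> distinct s \<and> set s \<subseteq> V"
  by (induction s rule: rev_induct) (auto simp: greedy_snoc eligible_def)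

definition consistent_labels :: "'a set \<Rightarrow> ('a \<Rightarrow> 'a \<Rightarrow> bool)
    \<Rightarrow> 'a list \<times> ('a \<Rightarrow> nat set) \<Rightarrow> bool" where
  "consistent_labels V E st \<longleftrightarrow> (\<forall>w\<in>V - set (fst st). snd st w = prefix_label E (fst st) w)"

lemma fst_tbls_step:
  assumes "consistent_labels V E (s, lab)"
  shows "fst (tbls_step V E prec \<tau> (s, lab)) =
    s @ [hd (filter (\<lambda>x. x \<in> eligible V E prec s) \<tau>)]"
proof -
  have "x \<in> V \<and> x \<notin> set s \<and> (\<forall>y\<in>V - set s. \<not> prec (lab x) (lab y))
      \<longleftrightarrow> x \<in> eligible V E prec s" for x
    using assms by (auto simp: consistent_labels_def eligible_def)
  then show ?thesis by (simp add: tbls_step_def Let_def)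
qed

lemma consistent_labels_tbls_step:
  assumes "graph V E" and "consistent_labels V E st"
  shows "consistent_labels V E (tbls_step V E prec \<tau> st)"
proof -
  obtain s lab where st: "st = (s, lab)" by fastforce
  obtain v where step: "tbls_step V E prec \<tau> (s, lab) = (s @ [v],
      \<lambda>w. if w \<in> V - set s - {v} \<and> E v w then lab w \<union> {Suc (length s)} else lab w)"
    by (simp add: tbls_step_def Let_def)
  have "E v w \<longleftrightarrow> E w v" for w
    using assms(1) by (auto simp: graph_def)
  then show ?thesis
    using assms(2) unfolding st consistent_labels_def step by (auto simp: prefix_label_snoc)
qed

definition tbls_run :: "'a set \<Rightarrow> ('a \<Rightarrow> 'a \<Rightarrow> bool) \<Rightarrow> (nat set \<Rightarrow> nat set \<Rightarrow> bool)
    \<Rightarrow> 'a list \<Rightarrow> nat \<Rightarrow> 'a list \<times> ('a \<Rightarrow> nat set)" where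
  "tbls_run V E prec \<tau> k = (tbls_step V E prec \<tau> ^^ k) ([], (\<lambda>_. {}))"

lemma tbls_run_Suc:
  "tbls_run V E prec \<tau> (Suc k) = tbls_step V E prec \<tau> (tbls_run V E prec \<tau> k)"
  by (simp add: tbls_run_def)

lemma consistent_labels_tbls_run:
  assumes "graph V E"
  shows "consistent_labels V E (tbls_run V E prec \<tau> k)"
proof (induction k)
  case 0
  then show ?case by (simp add: tbls_run_def consistent_labels_def prefix_label_def)
next
  case (Suc k)
  then show ?case using consistent_labels_tbls_step[OF assms] by (simp add: tbls_run_Suc)
qed

lemma tbls_run_greedy:
  assumes "graph V E" and "strict_po_Pf prec" and "is_ordering V \<tau>" and "k \<le> card V"
  shows "greedy V E prec (fst (tbls_run V E prec \<tau> k)) \<and> length (fst (tbls_run V E prec \<tau> k)) = k"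
  using assms(4)
proof (induction k)
  case 0
  then show ?case by (simp add: tbls_run_def)
next
  case (Suc k)
  obtain s lab where run: "tbls_run V E prec \<tau> k = (s, lab)" by fastforce
  have IH: "greedy V E prec s" "length s = k" using Suc run by auto
  have "distinct s" "set s \<subseteq> V" using greedy_distinct_subset[OF IH(1)] by auto
  then have "\<not> V \<subseteq> set s"
    using Suc.prems IH(2) card_mono[OF finite_set, of V s] distinct_card[of s] by auto
  then have "eligible V E prec s \<noteq> {}"
    using eligible_nonempty[OF assms(2)] assms(1) by (auto simp: graph_def)
  moreover have "eligible V E prec s \<subseteq> set \<tau>"
    using assms(3) by (auto simp: eligible_def is_ordering_def)
  ultimately have "filter (\<lambda>x. x \<in> eligible V E prec s) \<tau> \<noteq> []"
    by (auto simp: filter_empty_conv)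
  then have first: "hd (filter (\<lambda>x. x \<in> eligible V E prec s) \<tau>) \<in> eligible V E prec s"
    using hd_in_set by fastforce
  have "consistent_labels V E (s, lab)"
    using consistent_labels_tbls_run[OF assms(1), of prec \<tau> k] run by simp
  then show ?case
    using first run IH by (simp add: tbls_run_Suc fst_tbls_step greedy_snoc)
qed

lemma greedy_tbls:
  assumes "graph V E" and "strict_po_Pf prec" and "is_ordering V \<tau>"
  shows "greedy V E prec (tbls V E prec \<tau>)"
  using tbls_run_greedy[OF assms order.refl] by (simp add: tbls_def tbls_run_def)

lemma hd_filter_eq_nth:
  assumes "k < length xs" and "P (xs ! k)" and "\<forall>x\<in>set (take k xs). \<not> P x"
  shows "hd (filter P xs) = xs ! k"
proof -
  have "filter P xs = filter P (take k xs @ xs ! k # drop (Suc k) xs)"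
    using id_take_nth_drop[OF assms(1)] by simp
  also have "\<dots> = xs ! k # filter P (drop (Suc k) xs)"
    using assms(2,3) by (simp add: filter_empty_conv)
  finally show ?thesis by simp
qed

lemma tbls_run_greedy_ordering:
  assumes "graph V E" and "is_ordering V \<sigma>" and "greedy V E prec \<sigma>" and "k \<le> card V"
  shows "fst (tbls_run V E prec \<sigma> k) = take k \<sigma>"
  using assms(4)
proof (induction k)
  case 0
  then show ?case by (simp add: tbls_run_def)
next
  case (Suc k)
  obtain lab where run: "tbls_run V E prec \<sigma> k = (take k \<sigma>, lab)"
    using Suc by (metis Suc_leD prod.collapse)
  have k: "k < length \<sigma>"
    using Suc.prems assms(2) distinct_card[of \<sigma>] by (simp add: is_ordering_def)
  have "\<sigma> ! k \<in> eligible V E prec (take k \<sigma>)"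
    using assms(3) k by (simp add: greedy_def)
  then have "hd (filter (\<lambda>x. x \<in> eligible V E prec (take k \<sigma>)) \<sigma>) = \<sigma> ! k"
    using k by (intro hd_filter_eq_nth) (auto simp: eligible_def)
  moreover have "consistent_labels V E (take k \<sigma>, lab)"
    using consistent_labels_tbls_run[OF assms(1), of prec \<sigma> k] run by simp
  ultimately show ?case
    using run k by (simp add: tbls_run_Suc fst_tbls_step take_Suc_conv_app_nth)
qed

lemma tbls_greedy_ordering:
  assumes "graph V E" and "is_ordering V \<sigma>" and "greedy V E prec \<sigma>"
  shows "tbls V E prec \<sigma> = \<sigma>"
proof -
  have "length \<sigma> = card V"
    using assms(2) distinct_card[of \<sigma>] by (simp add: is_ordering_def)
  then show ?thesis
    using tbls_run_greedy_ordering[OF assms order.refl] by (simp add: tbls_def tbls_run_def)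
qed

lemma S_ordering_iff_greedy:
  assumes "graph V E" and "strict_po_Pf prec" and "is_ordering V \<sigma>"
  shows "S_ordering V E prec \<sigma> \<longleftrightarrow> greedy V E prec \<sigma>"
  using greedy_tbls[OF assms(1,2)] tbls_greedy_ordering[OF assms(1,3)] assms(3)
  unfolding S_ordering_def by metis

lemma distinct_nth_in_set_take_iff:
  assumes "distinct s" and "m < length s"
  shows "s ! m \<in> set (take j s) \<longleftrightarrow> m < j"
  using assms by (auto simp: in_set_conv_nth nth_eq_iff_index_eq)

lemma before_nth_iff:
  assumes "distinct s" and "a < length s" and "b < length s"
  shows "before s (s ! a) (s ! b) \<longleftrightarrow> a < b"
proof
  assume "before s (s ! a) (s ! b)"
  then obtain i j where ij: "1 \<le> i" "i < j" "j \<le> length s"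
      "s ! (i - 1) = s ! a" "s ! (j - 1) = s ! b"
    unfolding before_def nth1_def by blast
  moreover have "i - 1 < length s" "j - 1 < length s"
    using ij by auto
  ultimately have "i - 1 = a" "j - 1 = b"
    using assms nth_eq_iff_index_eq by metis+
  then show "a < b" using ij by simp
next
  assume "a < b"
  then show "before s (s ! a) (s ! b)"
    unfolding before_def nth1_def using assms by (intro exI[of _ "Suc a"] exI[of _ "Suc b"]) auto
qed

lemma N_sigma_nth:
  assumes "distinct s" and "j < length s"
  shows "N_sigma E s u (s ! j) = prefix_label E (take j s) u"
proof -
  have "before s (nth1 s i) (s ! j) \<longleftrightarrow> i \<le> j" if "1 \<le> i" "i \<le> length s" for i
    using before_nth_iff[OF assms(1) _ assms(2), of "i - 1"] that by (auto simp: nth1_def)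
  then show ?thesis
    using assms(2) by (auto simp: N_sigma_def prefix_label_def nth1_def)
qed

lemma greedy_iff_neighbourhood_condition:
  assumes "strict_po_Pf prec" and "is_ordering V \<sigma>"
  shows "greedy V E prec \<sigma> \<longleftrightarrow>
    (\<forall>x\<in>V. \<forall>y\<in>V. before \<sigma> x y \<longrightarrow> \<not> prec (N_sigma E \<sigma> x x) (N_sigma E \<sigma> y x))"
proof -
  have ds: "distinct \<sigma>" and V: "V = set \<sigma>"
    using assms(2) by (auto simp: is_ordering_def)
  have later: "y \<in> V - set (take j \<sigma>) \<longleftrightarrow> (\<exists>m. j \<le> m \<and> m < length \<sigma> \<and> y = \<sigma> ! m)" for j y
  proof
    assume y: "y \<in> V - set (take j \<sigma>)"
    then obtain m where "m < length \<sigma>" "y = \<sigma> ! m"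
      using V by (metis DiffD1 in_set_conv_nth)
    then show "\<exists>m. j \<le> m \<and> m < length \<sigma> \<and> y = \<sigma> ! m"
      using y distinct_nth_in_set_take_iff[OF ds] by (auto simp: not_less)
  qed (use V distinct_nth_in_set_take_iff[OF ds] in auto)
  have irrefl: "\<not> prec (prefix_label E s u) (prefix_label E s u)" for s u
    using assms(1) prefix_label_in_Pf_pos[of E s u] unfolding strict_po_Pf_def by blast
  have eligible_iff: "\<sigma> ! j \<in> eligible V E prec (take j \<sigma>) \<longleftrightarrow> (\<forall>m. j < m \<longrightarrow> m < length \<sigma> \<longrightarrow>
      \<not> prec (N_sigma E \<sigma> (\<sigma> ! j) (\<sigma> ! j)) (N_sigma E \<sigma> (\<sigma> ! m) (\<sigma> ! j)))"
    if "j < length \<sigma>" for j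
  proof -
    have "(\<forall>y\<in>V - set (take j \<sigma>). P y) \<longleftrightarrow> (\<forall>m. j \<le> m \<longrightarrow> m < length \<sigma> \<longrightarrow> P (\<sigma> ! m))"
      for P unfolding Ball_def later by blast
    moreover have "\<sigma> ! j \<in> V - set (take j \<sigma>)"
      using later that by blast
    ultimately show ?thesis
      using irrefl by (auto simp: eligible_def N_sigma_nth[OF ds that] le_less)
  qed
  have "greedy V E prec \<sigma> \<longleftrightarrow> (\<forall>j<length \<sigma>. \<forall>m<length \<sigma>. j < m \<longrightarrow>
      \<not> prec (N_sigma E \<sigma> (\<sigma> ! j) (\<sigma> ! j)) (N_sigma E \<sigma> (\<sigma> ! m) (\<sigma> ! j)))"
    unfolding greedy_def using eligible_iff by blast
  also have "\<dots> \<longleftrightarrow>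
      (\<forall>x\<in>V. \<forall>y\<in>V. before \<sigma> x y \<longrightarrow> \<not> prec (N_sigma E \<sigma> x x) (N_sigma E \<sigma> y x))"
    unfolding V all_set_conv_all_nth using before_nth_iff[OF ds] by blast
  finally show ?thesis .
qed

theorem mainTheorem1:
  fixes V :: "'a set" and E :: "'a \<Rightarrow> 'a \<Rightarrow> bool"
    and prec :: "nat set \<Rightarrow> nat set \<Rightarrow> bool" and \<sigma> :: "'a list"
  assumes "graph V E" and "strict_po_Pf prec" and "is_ordering V \<sigma>"
  shows "S_ordering V E prec \<sigma> \<longleftrightarrow>
    (\<forall>x\<in>V. \<forall>y\<in>V. before \<sigma> x y \<longrightarrow> \<not> prec (N_sigma E \<sigma> x x) (N_sigma E \<sigma> y x))"
  using S_ordering_iff_greedy[OF assms] greedy_iff_neighbourhood_condition[OF assms(2,3)] by simp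

end
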